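(* Let $V$ be the potential of the planar $n$-body problem with positive masses, $c$ a Darboux point with multiplier $-1$, and $W$ the associated matrix. If the variational equation near a conic orbit is partially decoupled, then $W$ has a double (multiple) eigenvalue.
   Context: Positions $q\in\mathbb{C}^{2n}$, body $i$ at $(q_i,q_{i+n})$; $m_{i+n}:=m_i>0$. $V(q)=\sum_{i<j}\frac{m_im_j}{\sqrt{(q_i-q_j)^2+(q_{i+n}-q_{j+n})^2}}$. Darboux point with multiplier $-1$: $c$ with nonzero mutual distances and $\partial V/\partial q_k(c)=-m_kc_k$ for all $k$. $W_{k,l}=\frac1{m_k}\frac{\partial^2V}{\partial q_k\partial q_l}(c)$. $R_\theta=\begin{pmatrix}\cos\theta I_n&-\sin\theta I_n\\ \sin\theta I_n&\cos\theta I_n\end{pmatrix}$, $\theta\in\mathbb{C}$. Partially decoupled: there exist a nonzero subspace $\tilde V$ stable under all $R_\theta$ and $\lambda$ with $Wv=\lambda v$ for all $v\in\tilde V$. *)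

theory Defs
  imports Complex_Main "Jordan_Normal_Form.Char_Poly"
begin

text \<open>Coordinates: q is a complex vector of dimension 2n; body i (i < n) is at
  (q$i, q$(i+n)). Coordinate k (k < 2n) belongs to body k mod n, component k div n.\<close>

definition sqdist :: "nat \<Rightarrow> complex vec \<Rightarrow> nat \<Rightarrow> nat \<Rightarrow> complex" where
  "sqdist n q i j = (q$i - q$j)^2 + (q$(i+n) - q$(j+n))^2"

text \<open>Since positions are complex, the mutual distance r i j is a chosen square root
  of sqdist (a determination of the multivalued potential
  V = sum_{i<j} m_i m_j / r_ij).\<close>

definition gradV :: "nat \<Rightarrow> (nat \<Rightarrow> real) \<Rightarrow> (nat \<Rightarrow> nat \<Rightarrow> complex) \<Rightarrow> complex vec \<Rightarrow> nat \<Rightarrow> complex" where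
  "gradV n m r q k =
     - (\<Sum>b\<in>{0..<n} - {k mod n}.
          of_real (m (k mod n) * m b) * (q$k - q$(b + n * (k div n))) / r (k mod n) b ^ 3)"

text \<open>Hessian of 1/r(u), u = q_a - q_b, w.r.t. components s,t of u.\<close>
definition pairHess :: "nat \<Rightarrow> complex vec \<Rightarrow> (nat \<Rightarrow> nat \<Rightarrow> complex) \<Rightarrow> nat \<Rightarrow> nat \<Rightarrow> nat \<Rightarrow> nat \<Rightarrow> complex" where
  "pairHess n q r a b s t =
     3 * (q$(a + n*s) - q$(b + n*s)) * (q$(a + n*t) - q$(b + n*t)) / r a b ^ 5
     - (if s = t then 1 else 0) / r a b ^ 3"

definition hessV :: "nat \<Rightarrow> (nat \<Rightarrow> real) \<Rightarrow> (nat \<Rightarrow> nat \<Rightarrow> complex) \<Rightarrow> complex vec \<Rightarrow> nat \<Rightarrow> nat \<Rightarrow> complex" where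
  "hessV n m r q k l =
     (if k mod n = l mod n then
        (\<Sum>e\<in>{0..<n} - {k mod n}. of_real (m (k mod n) * m e) * pairHess n q r (k mod n) e (k div n) (l div n))
      else - of_real (m (k mod n) * m (l mod n)) * pairHess n q r (k mod n) (l mod n) (k div n) (l div n))"

definition darboux_point :: "nat \<Rightarrow> (nat \<Rightarrow> real) \<Rightarrow> (nat \<Rightarrow> nat \<Rightarrow> complex) \<Rightarrow> complex vec \<Rightarrow> bool" where
  "darboux_point n m r c \<longleftrightarrow>
     c \<in> carrier_vec (2*n) \<and>
     (\<forall>i<n. \<forall>j<n. i \<noteq> j \<longrightarrow> sqdist n c i j \<noteq> 0 \<and> r i j ^ 2 = sqdist n c i j \<and> r i j = r j i) \<and>
     (\<forall>k<2*n. gradV n m r c k = - of_real (m (k mod n)) * c$k)"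

definition Wmat :: "nat \<Rightarrow> (nat \<Rightarrow> real) \<Rightarrow> (nat \<Rightarrow> nat \<Rightarrow> complex) \<Rightarrow> complex vec \<Rightarrow> complex mat" where
  "Wmat n m r c = mat (2*n) (2*n) (\<lambda>(k,l). hessV n m r c k l / of_real (m (k mod n)))"

definition Rrot :: "nat \<Rightarrow> complex \<Rightarrow> complex mat" where
  "Rrot n \<theta> = mat (2*n) (2*n) (\<lambda>(i,j).
     if i mod n = j mod n then
       (if i div n = 0 \<and> j div n = 0 then cos \<theta>
        else if i div n = 0 then - sin \<theta>
        else if j div n = 0 then sin \<theta>
        else cos \<theta>)
     else 0)"

definition is_subspace :: "nat \<Rightarrow> complex vec set \<Rightarrow> bool" where
  "is_subspace d S \<longleftrightarrow> S \<subseteq> carrier_vec d \<and> 0\<^sub>v d \<in> S \<and>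
     (\<forall>v\<in>S. \<forall>w\<in>S. v + w \<in> S) \<and> (\<forall>a. \<forall>v\<in>S. a \<cdot>\<^sub>v v \<in> S)"

definition partially_decoupled :: "nat \<Rightarrow> complex mat \<Rightarrow> bool" where
  "partially_decoupled n W \<longleftrightarrow>
     (\<exists>S lam. is_subspace (2*n) S \<and> S \<noteq> {0\<^sub>v (2*n)} \<and>
        (\<forall>\<theta>. \<forall>v\<in>S. Rrot n \<theta> *\<^sub>v v \<in> S) \<and>
        (\<forall>v\<in>S. W *\<^sub>v v = lam \<cdot>\<^sub>v v))"

end

theory Submission
  imports Defs "Jordan_Normal_Form.Schur_Decomposition"
begin

hide_const (open) Coset.order

text \<open>
  Symmetry of the distances makes the Hessian of V symmetric, so W is self-adjoint for the complex
  bilinear form (x, y) = \<Sum> m_k x_k y_k, i.e. m_k W_kl = m_l W_lk. Hence for an eigenvector z of W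
  the vector diag(m) z is a left eigenvector for the same eigenvalue, and its pairing with z is
  (z, z). For a simple eigenvalue a left and a right eigenvector always pair nontrivially (in a
  Schur form with that eigenvalue in the top left corner both are forced to have a nonzero first
  coordinate), so an eigenvector with (z, z) = 0 forces a multiple eigenvalue. A rotation-invariant
  eigenspace contains such a vector: if J is the rotation by \<pi>/2 and v \<noteq> 0 lies in the space,
  then one of v \<plusminus> i J v is nonzero and satisfies z_(k+n) = \<plusminus>i z_k, so z_k^2 + z_(k+n)^2 = 0 for
  every body. Neither the Darboux equations nor the value of the multiplier are needed.
\<close>

lemma upper_triangular_mult_vec_nth:
  assumes B: "B \<in> carrier_mat N N" and ut: "upper_triangular B"
    and x: "x \<in> carrier_vec N" and i: "i < N"
    and tail: "\<And>j. i < j \<Longrightarrow> j < N \<Longrightarrow> x$j = 0"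
  shows "(B *\<^sub>v x)$i = B$$(i,i) * x$i"
proof -
  have "(B *\<^sub>v x)$i = (\<Sum>j\<in>{0..<N}. B$$(i,j) * x$j)"
    using B x i by (simp add: scalar_prod_def)
  also have "\<dots> = (\<Sum>j\<in>{0..<N}. if j = i then B$$(i,i) * x$i else 0)"
    using B ut i tail unfolding upper_triangular_def
    by (intro sum.cong) (auto simp: linorder_neq_iff)
  finally show ?thesis using i by simp
qed

lemma upper_triangular_transpose_mult_vec_nth:
  assumes B: "B \<in> carrier_mat N N" and ut: "upper_triangular B"
    and y: "y \<in> carrier_vec N" and j: "j < N"
    and head: "\<And>i. i < j \<Longrightarrow> y$i = 0"
  shows "(B\<^sup>T *\<^sub>v y)$j = B$$(j,j) * y$j"
proof -
  have "(B\<^sup>T *\<^sub>v y)$j = (\<Sum>i\<in>{0..<N}. B$$(i,j) * y$i)"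
    using B y j by (simp add: scalar_prod_def)
  also have "\<dots> = (\<Sum>i\<in>{0..<N}. if i = j then B$$(j,j) * y$j else 0)"
    using B ut j head unfolding upper_triangular_def
    by (intro sum.cong) (auto simp: linorder_neq_iff)
  finally show ?thesis using j by simp
qed

lemma upper_triangular_eigenvector_tail_zero:
  fixes B :: "'a::field mat"
  assumes B: "B \<in> carrier_mat N N" and ut: "upper_triangular B"
    and diag: "\<And>i. 0 < i \<Longrightarrow> i < N \<Longrightarrow> B$$(i,i) \<noteq> \<mu>"
    and x: "x \<in> carrier_vec N" and ev: "B *\<^sub>v x = \<mu> \<cdot>\<^sub>v x"
    and i: "0 < i" "i < N"
  shows "x$i = 0"
  using i
proof (induction "N - i" arbitrary: i rule: less_induct)
  case less
  have "\<mu> * x$i = (B *\<^sub>v x)$i" using ev x less by simp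
  also have "\<dots> = B$$(i,i) * x$i"
    using less by (intro upper_triangular_mult_vec_nth[OF B ut x]) auto
  finally show ?case using diag[OF less(2,3)] by simp
qed

lemma upper_triangular_left_eigenvector_zero:
  fixes B :: "'a::field mat"
  assumes B: "B \<in> carrier_mat N N" and ut: "upper_triangular B"
    and diag: "\<And>i. 0 < i \<Longrightarrow> i < N \<Longrightarrow> B$$(i,i) \<noteq> \<mu>"
    and y: "y \<in> carrier_vec N" and ev: "B\<^sup>T *\<^sub>v y = \<mu> \<cdot>\<^sub>v y"
    and y0: "y$0 = 0"
  shows "y = 0\<^sub>v N"
proof -
  have "y$j = 0" if "j < N" for j
    using that
  proof (induction j rule: less_induct)
    case (less j)
    show ?case
    proof (cases "j = 0")
      case False
      have "\<mu> * y$j = (B\<^sup>T *\<^sub>v y)$j" using ev y less by simp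
      also have "\<dots> = B$$(j,j) * y$j"
        using less by (intro upper_triangular_transpose_mult_vec_nth[OF B ut y]) auto
      finally show ?thesis using diag[of j] False less by auto
    qed (use y0 in simp)
  qed
  then show ?thesis using y by (intro eq_vecI) auto
qed

lemma order_prod_linear_factors:
  "order a (\<Prod>b\<leftarrow>bs. [:- b, 1:]) = length (filter ((=) a) bs)"
  by (subst order_prod_list) (auto simp: o_def order_linear', induction bs, auto)

lemma simple_eigenvalue_schur_form:
  fixes A :: "complex mat"
  assumes A: "A \<in> carrier_mat N N" and simple: "order \<mu> (char_poly A) \<le> 1"
  obtains B P Q where "similar_mat_wit A B P Q" "upper_triangular B"
    "\<And>i. 0 < i \<Longrightarrow> i < N \<Longrightarrow> B$$(i,i) \<noteq> \<mu>"
proof -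
  obtain as where cp: "char_poly A = (\<Prod>a\<leftarrow>as. [:- a, 1:])"
    using char_poly_factorized[OF A] by blast
  have reorder: "(\<Prod>a\<leftarrow>filter P xs @ filter (\<lambda>a. \<not> P a) xs. f a) = (\<Prod>a\<leftarrow>xs. f a)"
    for P and f :: "complex \<Rightarrow> complex poly" and xs
    by (induction xs) (auto simp: mult.left_commute)
  define es where "es = filter ((=) \<mu>) as @ filter ((\<noteq>) \<mu>) as"
  have cp_es: "char_poly A = (\<Prod>a\<leftarrow>es. [:- a, 1:])"
    unfolding cp es_def by (rule reorder[symmetric])
  have few: "length (filter ((=) \<mu>) as) \<le> 1"
    using simple unfolding cp order_prod_linear_factors .
  obtain B P Q where schur: "schur_decomposition A es = (B, P, Q)"
    by (cases "schur_decomposition A es") auto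
  from schur_decomposition[OF A cp_es schur]
  have wit: "similar_mat_wit A B P Q" and ut: "upper_triangular B" and diag: "diag_mat B = es"
    by auto
  have B: "B \<in> carrier_mat N N" using similar_mat_witD2[OF A wit] by auto
  have "B$$(i,i) \<noteq> \<mu>" if "0 < i" "i < N" for i
  proof -
    let ?k = "i - length (filter ((=) \<mu>) as)"
    have "length es = N" and "B$$(i,i) = es ! i"
      using diag B that by (auto simp: diag_mat_def)
    then have "?k < length (filter ((\<noteq>) \<mu>) as)" and "B$$(i,i) = filter ((\<noteq>) \<mu>) as ! ?k"
      using few that unfolding es_def by (auto simp: nth_append)
    then show ?thesis using nth_mem by fastforce
  qed
  with wit ut show thesis by (rule that)
qed

lemma similar_mat_wit_transpose:
  fixes A :: "'a::comm_semiring_1 mat"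
  assumes "similar_mat_wit A B P Q"
  shows "similar_mat_wit A\<^sup>T B\<^sup>T Q\<^sup>T P\<^sup>T"
proof -
  from similar_mat_witD[OF refl assms] obtain n where
    car: "A \<in> carrier_mat n n" "B \<in> carrier_mat n n" "P \<in> carrier_mat n n" "Q \<in> carrier_mat n n"
    and inv: "P * Q = 1\<^sub>m n" "Q * P = 1\<^sub>m n" and A: "A = P * B * Q"
    by blast
  have "Q\<^sup>T * P\<^sup>T = 1\<^sub>m n"
    unfolding transpose_mult[OF car(3,4), symmetric] inv(1) by simp
  moreover have "P\<^sup>T * Q\<^sup>T = 1\<^sub>m n"
    unfolding transpose_mult[OF car(4,3), symmetric] inv(2) by simp
  moreover have "A\<^sup>T = Q\<^sup>T * (B\<^sup>T * P\<^sup>T)"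
    unfolding A transpose_mult[OF mult_carrier_mat[OF car(3,2)] car(4)] transpose_mult[OF car(3,2)] ..
  then have "A\<^sup>T = Q\<^sup>T * B\<^sup>T * P\<^sup>T"
    using car by (simp add: assoc_mult_mat[of _ n n _ n _ n])
  ultimately show ?thesis using car by (intro similar_mat_witI) auto
qed

lemma similar_mat_wit_eigenvector:
  fixes A :: "'a::field mat"
  assumes wit: "similar_mat_wit A B P Q" and ev: "eigenvector A v \<mu>"
  shows "eigenvector B (Q *\<^sub>v v) \<mu>"
proof -
  from similar_mat_witD[OF refl wit] obtain n where
    car: "A \<in> carrier_mat n n" "B \<in> carrier_mat n n" "P \<in> carrier_mat n n" "Q \<in> carrier_mat n n"
    and inv: "P * Q = 1\<^sub>m n" "Q * P = 1\<^sub>m n" and A: "A = P * B * Q"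
    by blast
  from ev car have v: "v \<in> carrier_vec n" "v \<noteq> 0\<^sub>v n" "A *\<^sub>v v = \<mu> \<cdot>\<^sub>v v"
    unfolding eigenvector_def by auto
  have "Q * A = (Q * P) * B * Q"
    using car unfolding A by (simp add: assoc_mult_mat[of _ n n _ n _ n])
  then have "B * Q = Q * A" using car inv by simp
  have "B *\<^sub>v (Q *\<^sub>v v) = (Q * A) *\<^sub>v v"
    using car v \<open>B * Q = Q * A\<close> by (simp flip: assoc_mult_mat_vec)
  also have "\<dots> = \<mu> \<cdot>\<^sub>v (Q *\<^sub>v v)"
    using car v by (simp add: mult_mat_vec[OF car(4) v(1)])
  finally have "B *\<^sub>v (Q *\<^sub>v v) = \<mu> \<cdot>\<^sub>v (Q *\<^sub>v v)" .
  moreover have "Q *\<^sub>v v \<noteq> 0\<^sub>v n"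
  proof
    assume "Q *\<^sub>v v = 0\<^sub>v n"
    have "v = P *\<^sub>v (Q *\<^sub>v v)"
      using car inv v by (simp flip: assoc_mult_mat_vec)
    also have "\<dots> = 0\<^sub>v n" using car \<open>Q *\<^sub>v v = 0\<^sub>v n\<close> by auto
    finally show False using v(2) by simp
  qed
  ultimately show ?thesis using car v(1) unfolding eigenvector_def by auto
qed

lemma simple_eigenvalue_eigenvectors_not_orthogonal:
  fixes A :: "complex mat"
  assumes A: "A \<in> carrier_mat N N" and simple: "order \<mu> (char_poly A) \<le> 1"
    and x: "eigenvector A x \<mu>" and y: "eigenvector A\<^sup>T y \<mu>"
  shows "y \<bullet> x \<noteq> 0"
proof -
  obtain B P Q where wit: "similar_mat_wit A B P Q" and ut: "upper_triangular B"
    and diag: "\<And>i. 0 < i \<Longrightarrow> i < N \<Longrightarrow> B$$(i,i) \<noteq> \<mu>"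
    using simple_eigenvalue_schur_form[OF A simple] by blast
  note car = similar_mat_witD2(4-7)[OF A wit]
  define x' where "x' = Q *\<^sub>v x"
  define y' where "y' = P\<^sup>T *\<^sub>v y"
  have x': "x' \<in> carrier_vec N" "x' \<noteq> 0\<^sub>v N" "B *\<^sub>v x' = \<mu> \<cdot>\<^sub>v x'"
    using similar_mat_wit_eigenvector[OF wit x] car unfolding x'_def eigenvector_def by auto
  have y': "y' \<in> carrier_vec N" "y' \<noteq> 0\<^sub>v N" "B\<^sup>T *\<^sub>v y' = \<mu> \<cdot>\<^sub>v y'"
    using similar_mat_wit_eigenvector[OF similar_mat_wit_transpose[OF wit] y] car
    unfolding y'_def eigenvector_def by auto
  have x'_tail: "x'$i = 0" if "0 < i" "i < N" for i
    using upper_triangular_eigenvector_tail_zero[OF car(2) ut diag x'(1,3) that] .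
  have "x'$0 \<noteq> 0"
  proof
    assume "x'$0 = 0"
    then have "x'$i = 0" if "i < N" for i
      using x'_tail that by (cases "i = 0") auto
    then have "x' = 0\<^sub>v N" using x'(1) by (intro eq_vecI) auto
    with x'(2) show False ..
  qed
  moreover have "y'$0 \<noteq> 0"
    using upper_triangular_left_eigenvector_zero[OF car(2) ut diag y'(1,3)] y'(2) by blast
  moreover have "y' \<bullet> x' = y'$0 * x'$0"
  proof -
    have "y' \<bullet> x' = (\<Sum>i\<in>{0..<N}. if i = 0 then y'$0 * x'$0 else 0)"
      unfolding scalar_prod_def using x'(1) x'_tail by (intro sum.cong) auto
    also have "\<dots> = y'$0 * x'$0" using x'(1,2) by (cases N) auto
    finally show ?thesis .
  qed
  moreover have "y \<bullet> x = y' \<bullet> x'"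
  proof -
    have x_car: "x \<in> carrier_vec N" and y_car: "y \<in> carrier_vec N"
      using x y A unfolding eigenvector_def by auto
    have "P *\<^sub>v x' = (P * Q) *\<^sub>v x" unfolding x'_def using car x_car by simp
    also have "\<dots> = x" using similar_mat_witD2(1)[OF A wit] x_car by simp
    finally have x_eq: "x = P *\<^sub>v x'" ..
    show ?thesis
      unfolding y'_def x_eq by (rule transpose_vec_mult_scalar[OF car(3) x'(1) y_car, symmetric])
  qed
  ultimately show ?thesis by simp
qed

lemma weighted_symmetric_left_eigenvector:
  fixes A :: "'a::comm_ring_1 mat"
  assumes A: "A \<in> carrier_mat N N"
    and sym: "\<And>k l. k < N \<Longrightarrow> l < N \<Longrightarrow> d k * A$$(k,l) = d l * A$$(l,k)"
    and z: "z \<in> carrier_vec N" "A *\<^sub>v z = \<mu> \<cdot>\<^sub>v z"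
  shows "A\<^sup>T *\<^sub>v vec N (\<lambda>k. d k * z$k) = \<mu> \<cdot>\<^sub>v vec N (\<lambda>k. d k * z$k)"
proof (rule eq_vecI)
  fix l assume "l < dim_vec (\<mu> \<cdot>\<^sub>v vec N (\<lambda>k. d k * z$k))"
  then have l: "l < N" by simp
  have "(A\<^sup>T *\<^sub>v vec N (\<lambda>k. d k * z$k)) $ l = (\<Sum>k\<in>{0..<N}. d k * A$$(k,l) * z$k)"
    using A l by (simp add: scalar_prod_def mult_ac)
  also have "\<dots> = (\<Sum>k\<in>{0..<N}. d l * A$$(l,k) * z$k)"
    using l sym by (intro sum.cong) auto
  also have "\<dots> = d l * (A *\<^sub>v z) $ l"
    using A l z(1) by (simp add: scalar_prod_def sum_distrib_left mult.assoc)
  also have "\<dots> = (\<mu> \<cdot>\<^sub>v vec N (\<lambda>k. d k * z$k)) $ l"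
    using l z by (simp add: mult.left_commute)
  finally show "(A\<^sup>T *\<^sub>v vec N (\<lambda>k. d k * z$k)) $ l = (\<mu> \<cdot>\<^sub>v vec N (\<lambda>k. d k * z$k)) $ l" .
qed (use A in simp)

lemma isotropic_eigenvector_multiple_eigenvalue:
  fixes A :: "complex mat" and d :: "nat \<Rightarrow> complex"
  assumes A: "A \<in> carrier_mat N N"
    and d: "\<And>k. k < N \<Longrightarrow> d k \<noteq> 0"
    and sym: "\<And>k l. k < N \<Longrightarrow> l < N \<Longrightarrow> d k * A$$(k,l) = d l * A$$(l,k)"
    and z: "eigenvector A z \<mu>"
    and isotropic: "(\<Sum>k<N. d k * z$k ^ 2) = 0"
  shows "order \<mu> (char_poly A) \<ge> 2"
proof (rule ccontr)
  assume "\<not> order \<mu> (char_poly A) \<ge> 2"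
  then have simple: "order \<mu> (char_poly A) \<le> 1" by simp
  from z A have zc: "z \<in> carrier_vec N" "z \<noteq> 0\<^sub>v N" "A *\<^sub>v z = \<mu> \<cdot>\<^sub>v z"
    unfolding eigenvector_def by auto
  define u where "u = vec N (\<lambda>k. d k * z$k)"
  have "A\<^sup>T *\<^sub>v u = \<mu> \<cdot>\<^sub>v u"
    unfolding u_def using weighted_symmetric_left_eigenvector[OF A sym zc(1,3)] .
  moreover have "u \<noteq> 0\<^sub>v N"
  proof
    assume "u = 0\<^sub>v N"
    then have "z$k = 0" if "k < N" for k
      using d[OF that] that by (metis index_vec index_zero_vec(1) mult_eq_0_iff u_def)
    then show False using zc(1,2) by (auto intro: eq_vecI)
  qed
  ultimately have "eigenvector A\<^sup>T u \<mu>"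
    using A unfolding eigenvector_def by (simp add: u_def)
  moreover have "u \<bullet> z = 0"
    using zc(1) isotropic by (simp add: scalar_prod_def u_def power2_eq_square mult.assoc lessThan_atLeast0)
  ultimately show False
    using simple_eigenvalue_eigenvectors_not_orthogonal[OF A simple z] by blast
qed

lemma Rrot_pi_half_index:
  assumes "i < 2*n" "j < 2*n"
  shows "Rrot n (of_real pi / 2) $$ (i,j) = (if j = i + n then -1 else if i = j + n then 1 else 0)"
proof -
  have divmod: "k div n = (if k < n then 0 else 1)" "k mod n = (if k < n then k else k - n)"
    if "k < 2*n" for k
    using that by (auto simp: div_if mod_if le_div_geq)
  have cos_sin: "cos (of_real pi / 2 :: complex) = 0" "sin (of_real pi / 2 :: complex) = 1"
    by (simp_all flip: of_real_divide add: cos_of_real sin_of_real)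
  show ?thesis
    using assms by (simp add: Rrot_def divmod cos_sin split: if_splits) linarith
qed

lemma dim_Rrot [simp]: "dim_row (Rrot n \<theta>) = 2*n" "dim_col (Rrot n \<theta>) = 2*n"
  by (simp_all add: Rrot_def)

lemma Rrot_pi_half_mult_vec:
  assumes v: "v \<in> carrier_vec (2*n)" and k: "k < n"
  shows "(Rrot n (of_real pi / 2) *\<^sub>v v) $ k = - v$(k+n)"
    and "(Rrot n (of_real pi / 2) *\<^sub>v v) $ (k+n) = v$k"
proof -
  have kn: "k < 2*n" "k + n < 2*n" using k by simp_all
  have row: "(Rrot n (of_real pi / 2) *\<^sub>v v) $ i = (\<Sum>j\<in>{0..<2*n}. Rrot n (of_real pi / 2) $$ (i,j) * v$j)"
    if "i < 2*n" for i
    using v that by (simp add: scalar_prod_def)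
  have "(Rrot n (of_real pi / 2) *\<^sub>v v) $ k = (\<Sum>j\<in>{0..<2*n}. if j = k + n then - v$j else 0)"
    unfolding row[OF kn(1)] using k by (intro sum.cong) (auto simp: Rrot_pi_half_index)
  then show "(Rrot n (of_real pi / 2) *\<^sub>v v) $ k = - v$(k+n)" using k by simp
  have "(Rrot n (of_real pi / 2) *\<^sub>v v) $ (k+n) = (\<Sum>j\<in>{0..<2*n}. if j = k then v$j else 0)"
    unfolding row[OF kn(2)] using k by (intro sum.cong) (auto simp: Rrot_pi_half_index)
  then show "(Rrot n (of_real pi / 2) *\<^sub>v v) $ (k+n) = v$k" using k by simp
qed

lemma rotation_invariant_subspace_isotropic_vector:
  assumes S: "is_subspace (2*n) S" "S \<noteq> {0\<^sub>v (2*n)}"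
    and rot: "\<forall>v\<in>S. Rrot n (of_real pi / 2) *\<^sub>v v \<in> S"
  obtains z where "z \<in> S" "z \<noteq> 0\<^sub>v (2*n)" "\<And>k. k < n \<Longrightarrow> z$(k+n)^2 = - (z$k^2)"
proof -
  from S obtain v where v: "v \<in> S" "v \<noteq> 0\<^sub>v (2*n)"
    unfolding is_subspace_def by blast
  define w where "w s = v + s \<cdot>\<^sub>v (Rrot n (of_real pi / 2) *\<^sub>v v)" for s
  have vc: "v \<in> carrier_vec (2*n)" using v S unfolding is_subspace_def by auto
  have w: "w s \<in> S" for s
    using S v rot unfolding is_subspace_def w_def by blast
  have w_nth: "w s $ k = v$k - s * v$(k+n)" "w s $ (k+n) = v$(k+n) + s * v$k" if "k < n" for s k
    using that vc Rrot_pi_half_mult_vec[OF vc that] by (simp_all add: w_def)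
  have w_isotropic: "w s $ (k+n)^2 = - (w s $ k^2)" if "s^2 = -1" "k < n" for s k
  proof -
    have "s * s = -1" using that(1) by (simp add: power2_eq_square)
    then have "w s $ (k+n) = s * w s $ k"
      using that(2) by (simp add: w_nth right_diff_distrib mult.assoc[symmetric])
    then show ?thesis using that(1) by (simp add: power_mult_distrib)
  qed
  have "v = (1/2) \<cdot>\<^sub>v (w \<i> + w (- \<i>))"
    using vc unfolding w_def by (intro eq_vecI) (auto simp: algebra_simps)
  then have "w \<i> \<noteq> 0\<^sub>v (2*n) \<or> w (- \<i>) \<noteq> 0\<^sub>v (2*n)"
    using v by auto
  then show thesis
    using that w w_isotropic[of "\<i>"] w_isotropic[of "- \<i>"] by auto
qed

lemma pairHess_commute: "pairHess n q r a b s t = pairHess n q r a b t s"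
proof -
  have "3 * (q$(a + n*s) - q$(b + n*s)) * (q$(a + n*t) - q$(b + n*t))
      = 3 * (q$(a + n*t) - q$(b + n*t)) * (q$(a + n*s) - q$(b + n*s))"
    by (simp only: mult.assoc mult.commute[of "q$(a + n*s) - q$(b + n*s)"])
  then show ?thesis unfolding pairHess_def by (simp add: eq_commute[of s t])
qed

lemma pairHess_swap:
  assumes "r a b = r b a"
  shows "pairHess n q r a b s t = pairHess n q r b a t s"
proof -
  have "3 * (q$(a + n*s) - q$(b + n*s)) * (q$(a + n*t) - q$(b + n*t))
      = 3 * (q$(b + n*t) - q$(a + n*t)) * (q$(b + n*s) - q$(a + n*s))"
    by (simp add: algebra_simps)
  then show ?thesis using assms unfolding pairHess_def by (simp add: eq_commute[of s t])
qed

lemma hessV_symmetric: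
  assumes r_sym: "\<forall>i<n. \<forall>j<n. i \<noteq> j \<longrightarrow> r i j = r j i" and kl: "k < 2*n" "l < 2*n"
  shows "hessV n m r q k l = hessV n m r q l k"
proof (cases "k mod n = l mod n")
  case True
  then show ?thesis unfolding hessV_def using pairHess_commute by simp
next
  case False
  with kl r_sym have "r (k mod n) (l mod n) = r (l mod n) (k mod n)" by simp
  with False show ?thesis unfolding hessV_def by (simp add: pairHess_swap mult.commute)
qed

lemma Wmat_mass_symmetric:
  assumes m: "\<forall>i<n. m i > 0" and r_sym: "\<forall>i<n. \<forall>j<n. i \<noteq> j \<longrightarrow> r i j = r j i"
    and kl: "k < 2*n" "l < 2*n"
  shows "m (k mod n) * Wmat n m r c $$ (k,l) = m (l mod n) * Wmat n m r c $$ (l,k)"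
proof -
  have "k mod n < n" "l mod n < n" using kl by simp_all
  then have "m (k mod n) \<noteq> 0" "m (l mod n) \<noteq> 0" using m by (metis less_irrefl)+
  then show ?thesis
    using kl hessV_symmetric[OF r_sym kl] unfolding Wmat_def by simp
qed

lemma mass_weighted_isotropic:
  fixes z :: "complex vec"
  assumes "\<And>k. k < n \<Longrightarrow> z$(k+n)^2 = - (z$k^2)"
  shows "(\<Sum>k<2*n. m (k mod n) * z$k^2) = 0"
proof -
  have split: "(\<Sum>k<2*n. g k) = (\<Sum>k<n. g k + g (k+n))" for g :: "nat \<Rightarrow> complex"
    using sum.atLeastLessThan_concat[of 0 n "n+n" g] sum.shift_bounds_nat_ivl[of g 0 n n]
    by (simp add: mult_2 atLeast0LessThan sum.distrib)
  show ?thesis unfolding split using assms by (simp add: algebra_simps)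
qed

theorem theorem10:
  fixes n :: nat and m :: "nat \<Rightarrow> real" and r :: "nat \<Rightarrow> nat \<Rightarrow> complex" and c :: "complex vec"
  assumes "\<forall>i<n. m i > 0"
    and "darboux_point n m r c"
    and "partially_decoupled n (Wmat n m r c)"
  shows "\<exists>\<mu>. order \<mu> (char_poly (Wmat n m r c)) \<ge> 2"
proof -
  let ?W = "Wmat n m r c"
  from assms(3) obtain S \<mu> where S: "is_subspace (2*n) S" "S \<noteq> {0\<^sub>v (2*n)}"
    and rot: "\<forall>\<theta>. \<forall>v\<in>S. Rrot n \<theta> *\<^sub>v v \<in> S" and eigen: "\<forall>v\<in>S. ?W *\<^sub>v v = \<mu> \<cdot>\<^sub>v v"
    unfolding partially_decoupled_def by blast
  obtain z where z: "z \<in> S" "z \<noteq> 0\<^sub>v (2*n)" and iso: "\<And>k. k < n \<Longrightarrow> z$(k+n)^2 = - (z$k^2)"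
    using rotation_invariant_subspace_isotropic_vector[OF S] rot by blast
  have W: "?W \<in> carrier_mat (2*n) (2*n)" by (simp add: Wmat_def)
  have "eigenvector ?W z \<mu>"
    using z eigen S W unfolding eigenvector_def is_subspace_def by auto
  have r_sym: "\<forall>i<n. \<forall>j<n. i \<noteq> j \<longrightarrow> r i j = r j i"
    using assms(2) unfolding darboux_point_def by blast
  have mass_nonzero: "complex_of_real (m (k mod n)) \<noteq> 0" if "k < 2*n" for k
  proof -
    have "k mod n < n" using that by simp
    then have "m (k mod n) > 0" using assms(1) by blast
    then show ?thesis by simp
  qed
  have "order \<mu> (char_poly ?W) \<ge> 2"
    by (rule isotropic_eigenvector_multiple_eigenvalue[OF W mass_nonzero
          Wmat_mass_symmetric[OF assms(1) r_sym] \<open>eigenvector ?W z \<mu>\<close> mass_weighted_isotropic[OF iso]])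
  then show ?thesis ..
qed

end
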